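(* For every finite chain ring $R$ and every $k\ge1$, the linear simplex code $\mathcal{S}_k^\alpha$ is not optimal with respect to the Griesmer bound, i.e., its length $n$ satisfies $n>\sum_{i=0}^{k(\mathcal{S}_k^\alpha)-1}\left\lceil\frac{d_H(\mathcal{S}_k^\alpha)}{q^i}\right\rceil$.
   Context: Let $R$ be a finite commutative chain ring with maximal ideal $\langle\gamma\rangle$, nilpotency index $s$ and residue field $R/\langle\gamma\rangle\cong\mathbb{F}_q$. Fix coset representatives $T=\{e_0,\dots,e_{q-1}\}$ with $e_0=0,e_1=1$, ordered $e_0<\dots<e_{q-1}$; each $r\in R$ is uniquely $\sum_{i=0}^{s-1}r_i\gamma^i$, $r_i\in T$; order $R$ by $x>y$ iff $x_i>y_i$ in $T$ for the largest $i$ with $x_i\neq y_i$; list $R=\{\rho_0,\dots,\rho_{q^s-1}\}$ increasingly. $\mathbf{a}^{(m)}$ is the constant vector of length $m$. Define $G_1^\alpha=(\rho_0\ \cdots\ \rho_{q^s-1})$ and, for $k>1$, $G_k^\alpha$ as the $k\times q^{sk}$ matrix of $q^s$ column blocks, the $j$-th having first row $\boldsymbol{\rho_j}^{(q^{s(k-1)})}$ and $G_{k-1}^\alpha$ below. $\mathcal{S}_k^\alpha$ is the $R$-submodule of $R^{q^{sk}}$ generated by the rows of $G_k^\alpha$. For a linear code $\mathcal{C}\subseteq R^n$, $d_H(\mathcal{C})$ is its minimum Hamming distance and $k(\mathcal{C})$ is the minimum rank of a free $R$-submodule $\mathcal{C}'\subseteq R^n$ with $\mathcal{C}\subseteq\mathcal{C}'$.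 The Griesmer bound states $n\ge\sum_{i=0}^{k(\mathcal{C})-1}\lceil d_H(\mathcal{C})/q^i\rceil$; a code is optimal with respect to it when equality holds. *)

theory Defs
  imports Main "HOL-Library.Multiset" Complex_Main
begin

definition is_ideal :: "'a::comm_ring_1 set \<Rightarrow> bool" where
  "is_ideal I \<longleftrightarrow> 0 \<in> I \<and> (\<forall>x\<in>I. \<forall>y\<in>I. x + y \<in> I) \<and> (\<forall>x\<in>I. \<forall>r. r * x \<in> I)"

definition chain_ring :: "'a::comm_ring_1 itself \<Rightarrow> bool" where
  "chain_ring _ \<longleftrightarrow> (\<forall>I J :: 'a set. is_ideal I \<longrightarrow> is_ideal J \<longrightarrow> I \<subseteq> J \<or> J \<subseteq> I)"

definition is_maximal_ideal :: "'a::comm_ring_1 set \<Rightarrow> bool" where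
  "is_maximal_ideal M \<longleftrightarrow> is_ideal M \<and> M \<noteq> UNIV \<and>
     (\<forall>J. is_ideal J \<longrightarrow> M \<subseteq> J \<longrightarrow> J = M \<or> J = UNIV)"

definition principal_ideal :: "'a::comm_ring_1 \<Rightarrow> 'a set" where
  "principal_ideal g = range (\<lambda>r. g * r)"

text \<open>Standing data: \<open>\<gamma>\<close> generates the maximal ideal, \<open>s\<close> is the nilpotency index of \<open>\<gamma>\<close>,
  the list \<open>e = [e_0,...,e_{q-1}]\<close> is an (ordered) set of coset representatives of
  \<open>R/\<langle>\<gamma>\<rangle>\<close> with \<open>e_0 = 0\<close>, \<open>e_1 = 1\<close>; its order is the list order.\<close>
definition chain_ring_data :: "'a::comm_ring_1 \<Rightarrow> nat \<Rightarrow> 'a list \<Rightarrow> bool" where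
  "chain_ring_data \<gamma> s e \<longleftrightarrow>
     is_maximal_ideal (principal_ideal \<gamma>) \<and>
     s \<ge> 1 \<and> \<gamma> ^ s = 0 \<and> \<gamma> ^ (s - 1) \<noteq> 0 \<and>
     distinct e \<and> length e \<ge> 2 \<and> e ! 0 = 0 \<and> e ! 1 = 1 \<and>
     (\<forall>r. \<exists>!t. t \<in> set e \<and> r - t \<in> principal_ideal \<gamma>)"

definition T_less :: "'a list \<Rightarrow> 'a \<Rightarrow> 'a \<Rightarrow> bool" where
  "T_less e a b \<longleftrightarrow> (\<exists>i j. i < j \<and> j < length e \<and> e ! i = a \<and> e ! j = b)"

definition digit :: "'a::comm_ring_1 \<Rightarrow> nat \<Rightarrow> 'a list \<Rightarrow> 'a \<Rightarrow> nat \<Rightarrow> 'a" where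
  "digit \<gamma> s e r = (THE d. (\<forall>i<s. d i \<in> set e) \<and> (\<forall>i\<ge>s. d i = 0) \<and>
                            r = (\<Sum>i<s. d i * \<gamma> ^ i))"

definition R_less :: "'a::comm_ring_1 \<Rightarrow> nat \<Rightarrow> 'a list \<Rightarrow> 'a \<Rightarrow> 'a \<Rightarrow> bool" where
  "R_less \<gamma> s e x y \<longleftrightarrow> (\<exists>i<s. digit \<gamma> s e x i \<noteq> digit \<gamma> s e y i \<and>
       (\<forall>j. i < j \<and> j < s \<longrightarrow> digit \<gamma> s e x j = digit \<gamma> s e y j) \<and>
       T_less e (digit \<gamma> s e x i) (digit \<gamma> s e y i))"

text \<open>\<open>\<rho>_j\<close>: the \<open>j\<close>-th element of \<open>R\<close> in increasing order (indices from 0).\<close>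
definition rho :: "'a::comm_ring_1 \<Rightarrow> nat \<Rightarrow> 'a list \<Rightarrow> nat \<Rightarrow> 'a" where
  "rho \<gamma> s e j = (THE r. card {x. R_less \<gamma> s e x r} = j)"

text \<open>\<open>G_k^\<alpha>\<close> as a function (row, column) for \<open>k \<ge> 1\<close>; rows \<open>< k\<close>, columns \<open>< q^{sk}\<close>
  where \<open>q = length e\<close>.\<close>
fun G_alpha :: "'a::comm_ring_1 \<Rightarrow> nat \<Rightarrow> 'a list \<Rightarrow> nat \<Rightarrow> nat \<Rightarrow> nat \<Rightarrow> 'a" where
  "G_alpha \<gamma> s e 0 i c = 0"
| "G_alpha \<gamma> s e (Suc 0) i c = (if i = 0 then rho \<gamma> s e c else 0)"
| "G_alpha \<gamma> s e (Suc (Suc k)) i c =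
     (let N = (length e ^ s) ^ Suc k in
      if i = 0 then rho \<gamma> s e (c div N) else G_alpha \<gamma> s e (Suc k) (i - 1) (c mod N))"

text \<open>Vectors of \<open>R^n\<close> are represented as functions \<open>nat \<Rightarrow> 'a\<close> vanishing from \<open>n\<close> on.\<close>
definition vecs :: "nat \<Rightarrow> (nat \<Rightarrow> 'a::zero) set" where
  "vecs n = {v. \<forall>c\<ge>n. v c = 0}"

definition rspan :: "nat \<Rightarrow> nat \<Rightarrow> (nat \<Rightarrow> nat \<Rightarrow> 'a::comm_ring_1) \<Rightarrow> (nat \<Rightarrow> 'a) set" where
  "rspan n m b = {v. \<exists>a. v = (\<lambda>c. if c < n then (\<Sum>j<m. a j * b j c) else 0)}"

definition lin_indep :: "nat \<Rightarrow> nat \<Rightarrow> (nat \<Rightarrow> nat \<Rightarrow> 'a::comm_ring_1) \<Rightarrow> bool" where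
  "lin_indep n m b \<longleftrightarrow> (\<forall>a. (\<forall>c<n. (\<Sum>j<m. a j * b j c) = 0) \<longrightarrow> (\<forall>j<m. a j = 0))"

definition free_submodule :: "nat \<Rightarrow> (nat \<Rightarrow> 'a::comm_ring_1) set \<Rightarrow> nat \<Rightarrow> bool" where
  "free_submodule n C' m \<longleftrightarrow> (\<exists>b. (\<forall>j<m. b j \<in> vecs n) \<and> lin_indep n m b \<and> C' = rspan n m b)"

definition code_rank :: "nat \<Rightarrow> (nat \<Rightarrow> 'a::comm_ring_1) set \<Rightarrow> nat" where
  "code_rank n C = (LEAST m. \<exists>C'. free_submodule n C' m \<and> C \<subseteq> C')"

definition hweight :: "nat \<Rightarrow> (nat \<Rightarrow> 'a::zero) \<Rightarrow> nat" where
  "hweight n v = card {c. c < n \<and> v c \<noteq> 0}"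

definition min_hdist :: "nat \<Rightarrow> (nat \<Rightarrow> 'a::comm_ring_1) set \<Rightarrow> nat" where
  "min_hdist n C = Min {hweight n v | v. v \<in> C \<and> v \<noteq> (\<lambda>_. 0)}"

definition simplex_alpha :: "'a::comm_ring_1 \<Rightarrow> nat \<Rightarrow> 'a list \<Rightarrow> nat \<Rightarrow> (nat \<Rightarrow> 'a) set" where
  "simplex_alpha \<gamma> s e k = rspan ((length e ^ s) ^ k) k (\<lambda>i c. G_alpha \<gamma> s e k i c)"

end

theory Submission
  imports Defs
begin

(* The rows of G_k^alpha are linearly independent, since every column pattern
   (rho_{j_1}, ..., rho_{j_k}) occurs, in particular every unit vector; hence k(S) <= k.
   Because R is ordered reverse-lexicographically in the gamma-adic digits, the lowest digit
   of rho_j is e_{j mod q}, and gamma^(s-1) * r vanishes exactly when the lowest digit of r is 0.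
   So gamma^(s-1) times the last row, whose c-th entry is rho_{c mod q^s}, has weight
   q^(sk) - q^(sk-1), and for this value the Griesmer sum over at most k <= sk terms telescopes
   to q^(sk) - q^(sk-k) < q^(sk). *)

section \<open>Base-\<open>q\<close> arithmetic on the naturals\<close>

lemma sum_digits_less_power:
  fixes q :: nat
  assumes "\<forall>j<i. u j < q"
  shows "(\<Sum>j<i. u j * q ^ j) < q ^ i"
  using assms
proof (induction i)
  case (Suc i)
  have "(\<Sum>j<Suc i. u j * q ^ j) < q ^ i + u i * q ^ i" using Suc by simp
  also have "\<dots> = (u i + 1) * q ^ i" by simp
  also have "\<dots> \<le> q * q ^ i" using Suc.prems by (intro mult_le_mono1) (auto simp: Suc_le_eq)
  finally show ?case by simp
qed simp

lemma sum_digits_less_sum_digits: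
  fixes q :: nat
  assumes "\<forall>j<s. u j < q" and "i < s" and "u i < v i"
    and "\<forall>j. i < j \<and> j < s \<longrightarrow> u j = v j"
  shows "(\<Sum>j<s. u j * q ^ j) < (\<Sum>j<s. v j * q ^ j)"
proof -
  have split: "(\<Sum>j<s. w j * q ^ j) = (\<Sum>j<i. w j * q ^ j) + w i * q ^ i + (\<Sum>j\<in>{Suc i..<s}. w j * q ^ j)"
    for w :: "nat \<Rightarrow> nat"
  proof -
    have "{..<s} = {..<Suc i} \<union> {Suc i..<s}" using assms(2) by auto
    then have "(\<Sum>j<s. w j * q ^ j) = (\<Sum>j<Suc i. w j * q ^ j) + (\<Sum>j\<in>{Suc i..<s}. w j * q ^ j)"
      by (metis finite_atLeastLessThan finite_lessThan ivl_disj_int_one(2) lessThan_atLeast0 sum.union_disjoint)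
    then show ?thesis by simp
  qed
  have "(\<Sum>j<i. u j * q ^ j) + u i * q ^ i < (u i + 1) * q ^ i"
    using sum_digits_less_power[of i u q] assms(1,2) by simp
  also have "\<dots> \<le> v i * q ^ i" using assms(3) by (intro mult_le_mono1) simp
  moreover have "(\<Sum>j\<in>{Suc i..<s}. u j * q ^ j) = (\<Sum>j\<in>{Suc i..<s}. v j * q ^ j)"
    using assms(4) by (intro sum.cong) auto
  ultimately show ?thesis unfolding split[of u] split[of v] by linarith
qed

lemma sum_digits_eq_mod_power:
  fixes q :: nat
  shows "(\<Sum>i<n. m div q ^ i mod q * q ^ i) = m mod q ^ n"
proof (induction n)
  case (Suc n)
  have "(\<Sum>i<Suc n. m div q ^ i mod q * q ^ i) = m mod q ^ n + m div q ^ n mod q * q ^ n"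
    using Suc.IH by simp
  also have "\<dots> = m mod (q ^ n * q)" unfolding mod_mult2_eq by (simp add: ac_simps)
  finally show ?case by (simp add: mult.commute)
qed simp

lemma card_not_dvd_less_mult:
  fixes q :: nat
  assumes "0 < q"
  shows "card {c. c < q * M \<and> \<not> q dvd c} = q * M - M"
proof -
  have multiples: "{c. c < q * M \<and> q dvd c} = (\<lambda>j. q * j) ` {..<M}"
    using assms by (auto elim!: dvdE)
  have "card {c. c < q * M \<and> q dvd c} = M"
    unfolding multiples using assms by (simp add: card_image inj_on_def)
  moreover have "{c. c < q * M \<and> \<not> q dvd c} = {..<q * M} - {c. c < q * M \<and> q dvd c}" by auto
  ultimately show ?thesis by (simp only:) (subst card_Diff_subset; auto)
qed

section \<open>The Griesmer sum of the simplex weight\<close>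

lemma ceiling_power_diff_divide_power:
  fixes q :: nat
  assumes "0 < q" and "i < N"
  shows "real_of_int \<lceil>(real q ^ N - real q ^ (N - 1)) / real q ^ i\<rceil>
           = real q ^ (N - i) - real q ^ (N - Suc i)"
proof -
  obtain t where N: "N = i + Suc t" using assms(2) by (metis add_Suc_right less_imp_Suc_add)
  have "(real q ^ N - real q ^ (N - 1)) / real q ^ i = real q ^ Suc t - real q ^ t"
    using assms(1) by (simp add: N power_add field_simps)
  also have "\<dots> = real_of_int (int q ^ Suc t - int q ^ t)" by simp
  finally show ?thesis by (simp add: N)
qed

lemma griesmer_sum_power_diff:
  fixes q :: nat
  assumes "0 < q" and "r \<le> N"
  shows "(\<Sum>i<r. real_of_int \<lceil>(real q ^ N - real q ^ (N - 1)) / real q ^ i\<rceil>)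
           = real q ^ N - real q ^ (N - r)"
proof -
  have "(\<Sum>i<r. real_of_int \<lceil>(real q ^ N - real q ^ (N - 1)) / real q ^ i\<rceil>)
          = (\<Sum>i<r. real q ^ (N - i) - real q ^ (N - Suc i))"
    using assms by (intro sum.cong refl ceiling_power_diff_divide_power) auto
  also have "\<dots> = real q ^ N - real q ^ (N - r)"
    using sum_lessThan_telescope'[where f = "\<lambda>i. real q ^ (N - i)"] by simp
  finally show ?thesis .
qed

lemma griesmer_sum_less_power:
  fixes q :: nat
  assumes "0 < q" and "r \<le> N" and "d \<le> q ^ N - q ^ (N - 1)"
  shows "(\<Sum>i<r. real_of_int \<lceil>real d / real q ^ i\<rceil>) < real q ^ N"
proof -
  have "q ^ (N - 1) \<le> q ^ N" using assms(1) by (simp add: power_increasing)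
  then have "real d \<le> real q ^ N - real q ^ (N - 1)"
    using assms(3) by (metis of_nat_diff of_nat_le_iff of_nat_power)
  then have "(\<Sum>i<r. real_of_int \<lceil>real d / real q ^ i\<rceil>)
               \<le> (\<Sum>i<r. real_of_int \<lceil>(real q ^ N - real q ^ (N - 1)) / real q ^ i\<rceil>)"
    using assms(1) by (intro sum_mono) (simp add: ceiling_mono divide_right_mono)
  also have "\<dots> = real q ^ N - real q ^ (N - r)"
    using assms(1,2) by (rule griesmer_sum_power_diff)
  also have "\<dots> < real q ^ N" using assms(1) by simp
  finally show ?thesis .
qed

section \<open>\<open>\<gamma>\<close>-adic digits\<close>

lemma mem_principal_ideal_iff: "x \<in> principal_ideal g \<longleftrightarrow> (\<exists>y. x = g * y)"
  unfolding principal_ideal_def by auto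

locale chain_ring_digits =
  fixes \<gamma> :: "'a::comm_ring_1" and s :: nat and e :: "'a list"
  assumes data: "chain_ring_data \<gamma> s e"
begin

lemma s_pos: "1 \<le> s"
  and gamma_pow_s_eq_0: "\<gamma> ^ s = 0"
  and gamma_pow_pred_neq_0: "\<gamma> ^ (s - 1) \<noteq> 0"
  and distinct_reps: "distinct e"
  and length_reps: "2 \<le> length e"
  and reps_0: "e ! 0 = 0"
  and ex1_rep: "\<exists>!t. t \<in> set e \<and> r - t \<in> principal_ideal \<gamma>"
  and maximal: "is_maximal_ideal (principal_ideal \<gamma>)"
  using data unfolding chain_ring_data_def by auto

lemma length_reps_pos: "0 < length e"
  using length_reps by linarith

lemma zero_in_reps: "0 \<in> set e"
  using length_reps_pos reps_0 nth_mem by metis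

lemma reps_eqI:
  assumes "a \<in> set e" and "b \<in> set e" and "a - b \<in> principal_ideal \<gamma>"
  shows "a = b"
proof -
  have "a - a \<in> principal_ideal \<gamma>" unfolding mem_principal_ideal_iff by (rule exI[of _ 0]) simp
  with assms ex1_rep[of a] show ?thesis by blast
qed

lemma unit_if_not_in_ideal:
  assumes u: "u \<notin> principal_ideal \<gamma>"
  shows "\<exists>v. u * v = 1"
proof -
  let ?J = "{\<gamma> * a + u * b | a b. True}"
  have "is_ideal ?J"
    unfolding is_ideal_def
  proof (intro conjI ballI allI)
    show "0 \<in> ?J" by (rule CollectI, rule exI[of _ 0], rule exI[of _ 0]) simp
  next
    fix x y assume "x \<in> ?J" "y \<in> ?J"
    then obtain a b a' b' where "x = \<gamma> * a + u * b" "y = \<gamma> * a' + u * b'" by blast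
    then have "x + y = \<gamma> * (a + a') + u * (b + b')" by (simp add: algebra_simps)
    then show "x + y \<in> ?J" by blast
  next
    fix x r assume "x \<in> ?J"
    then obtain a b where "x = \<gamma> * a + u * b" by blast
    then have "r * x = \<gamma> * (r * a) + u * (r * b)" by (simp add: algebra_simps)
    then show "r * x \<in> ?J" by blast
  qed
  moreover have "principal_ideal \<gamma> \<subseteq> ?J"
  proof
    fix x assume "x \<in> principal_ideal \<gamma>"
    then obtain y where "x = \<gamma> * y + u * 0" unfolding mem_principal_ideal_iff by auto
    then show "x \<in> ?J" by blast
  qed
  moreover have "u \<in> ?J" by (rule CollectI, rule exI[of _ 0], rule exI[of _ 1]) simp
  ultimately have "?J = UNIV" using maximal u unfolding is_maximal_ideal_def by blast
  then have "1 \<in> ?J" by simp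
  then obtain a b where ab: "1 = \<gamma> * a + u * b" by blast
  \<comment> \<open>\<open>\<gamma> a\<close> is nilpotent, so \<open>u b = 1 - \<gamma> a\<close> is inverted by a geometric series\<close>
  have "(1 - \<gamma> * a) * (\<Sum>i<s. (\<gamma> * a) ^ i) = 1"
    using one_diff_power_eq[of "\<gamma> * a" s] by (simp add: power_mult_distrib gamma_pow_s_eq_0)
  moreover have "u * b = 1 - \<gamma> * a" using ab by (simp add: eq_diff_eq add.commute)
  ultimately have "u * (b * (\<Sum>i<s. (\<gamma> * a) ^ i)) = 1" by (simp add: mult.assoc[symmetric])
  then show ?thesis by blast
qed

lemma gamma_pow_mult_neq_0:
  assumes "i < s" and "u \<notin> principal_ideal \<gamma>"
  shows "\<gamma> ^ i * u \<noteq> 0"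
proof
  assume zero: "\<gamma> ^ i * u = 0"
  obtain v where "u * v = 1" using unit_if_not_in_ideal assms(2) by blast
  then have "\<gamma> ^ i = 0" using zero by (metis mult.assoc mult_1_right mult_zero_left)
  moreover have "\<gamma> ^ (s - 1) = \<gamma> ^ i * \<gamma> ^ (s - 1 - i)"
    using assms(1) by (simp flip: power_add)
  ultimately show False using gamma_pow_pred_neq_0 by simp
qed

lemma truncated_expansion_exists:
  "\<exists>d. (\<forall>i<m. d i \<in> set e) \<and> (\<forall>i\<ge>m. d i = 0) \<and>
        (\<exists>y. r = (\<Sum>i<m. d i * \<gamma> ^ i) + \<gamma> ^ m * y)"
proof (induction m)
  case 0
  show ?case by (rule exI[of _ "\<lambda>_. 0"]) auto
next
  case (Suc m)
  then obtain d y where d: "\<forall>i<m. d i \<in> set e" "\<forall>i\<ge>m. d i = 0"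
    and r: "r = (\<Sum>i<m. d i * \<gamma> ^ i) + \<gamma> ^ m * y"
    by blast
  obtain t y' where t: "t \<in> set e" and "y - t = \<gamma> * y'"
    using ex1_rep[of y] unfolding mem_principal_ideal_iff by blast
  then have y: "y = t + \<gamma> * y'" by (simp add: algebra_simps)
  have "(\<Sum>i<Suc m. (d(m := t)) i * \<gamma> ^ i) = (\<Sum>i<m. d i * \<gamma> ^ i) + t * \<gamma> ^ m"
    by simp
  then have "r = (\<Sum>i<Suc m. (d(m := t)) i * \<gamma> ^ i) + \<gamma> ^ Suc m * y'"
    using r y by (simp add: algebra_simps)
  moreover have "\<forall>i<Suc m. (d(m := t)) i \<in> set e" using d(1) t by (simp add: less_Suc_eq)
  moreover have "\<forall>i\<ge>Suc m. (d(m := t)) i = 0" using d(2) by simp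
  ultimately show ?case by blast
qed

lemma truncated_expansion_unique:
  assumes "m \<le> s" and "\<forall>i<m. d i \<in> set e \<and> d' i \<in> set e"
    and "(\<Sum>i<m. d i * \<gamma> ^ i) = (\<Sum>i<m. d' i * \<gamma> ^ i) + \<gamma> ^ m * y"
  shows "\<forall>i<m. d i = d' i"
  using assms
proof (induction m arbitrary: y)
  case (Suc m)
  have eq: "(\<Sum>i<m. d i * \<gamma> ^ i) = (\<Sum>i<m. d' i * \<gamma> ^ i) + \<gamma> ^ m * (d' m - d m + \<gamma> * y)"
    using Suc.prems(3) by (simp add: algebra_simps)
  have low: "\<forall>i<m. d i = d' i" using Suc.IH[OF _ _ eq] Suc.prems by simp
  then have "\<gamma> ^ m * (d' m - d m + \<gamma> * y) = 0" using eq by simp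
  moreover have "m < s" using Suc.prems(1) by simp
  ultimately have "d' m - d m + \<gamma> * y \<in> principal_ideal \<gamma>"
    using gamma_pow_mult_neq_0[of m "d' m - d m + \<gamma> * y"] by blast
  then obtain z where "d' m - d m + \<gamma> * y = \<gamma> * z" unfolding mem_principal_ideal_iff by blast
  then have "d' m - d m = \<gamma> * (z - y)" by (simp add: eq_diff_eq right_diff_distrib)
  then have "d' m - d m \<in> principal_ideal \<gamma>" unfolding mem_principal_ideal_iff by blast
  then have "d' m = d m" using reps_eqI Suc.prems(2) by blast
  then show ?case using low by (simp add: less_Suc_eq)
qed simp

definition is_expansion :: "'a \<Rightarrow> (nat \<Rightarrow> 'a) \<Rightarrow> bool" where
  "is_expansion r d \<longleftrightarrow>
     (\<forall>i<s. d i \<in> set e) \<and> (\<forall>i\<ge>s. d i = 0) \<and> r = (\<Sum>i<s. d i * \<gamma> ^ i)"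

lemma ex1_expansion: "\<exists>!d. is_expansion r d"
proof (rule ex_ex1I)
  show "\<exists>d. is_expansion r d"
    using truncated_expansion_exists[of s r] unfolding is_expansion_def
    by (auto simp: gamma_pow_s_eq_0)
next
  fix d d' assume d: "is_expansion r d" and d': "is_expansion r d'"
  have "\<forall>i<s. d i = d' i"
    using d d' unfolding is_expansion_def by (intro truncated_expansion_unique[of s _ _ 0]) auto
  show "d = d'"
  proof
    fix i show "d i = d' i"
      using \<open>\<forall>i<s. d i = d' i\<close> d d' unfolding is_expansion_def by (cases "i < s") auto
  qed
qed

lemma digit_is_expansion: "is_expansion r (digit \<gamma> s e r)"
proof -
  have "digit \<gamma> s e r = (THE d. is_expansion r d)" unfolding digit_def is_expansion_def ..
  then show ?thesis using theI'[OF ex1_expansion] by simp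
qed

lemma digit_eqI: "is_expansion r d \<Longrightarrow> digit \<gamma> s e r = d"
  using ex1_expansion digit_is_expansion by blast

lemma digit_in_reps: "i < s \<Longrightarrow> digit \<gamma> s e r i \<in> set e"
  using digit_is_expansion unfolding is_expansion_def by blast

lemma sum_digit: "(\<Sum>i<s. digit \<gamma> s e r i * \<gamma> ^ i) = r"
  using digit_is_expansion unfolding is_expansion_def by metis

lemma digit_inject: "(\<forall>i<s. digit \<gamma> s e x i = digit \<gamma> s e y i) \<Longrightarrow> x = y"
  by (metis (no_types, lifting) lessThan_iff sum.cong sum_digit)

section \<open>The ordering of \<open>R\<close>\<close>

definition rep_index :: "'a \<Rightarrow> nat" where
  "rep_index t = (LEAST i. i < length e \<and> e ! i = t)"

lemma rep_index_nth: "i < length e \<Longrightarrow> rep_index (e ! i) = i"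
  unfolding rep_index_def
  by (rule Least_equality) (use distinct_reps nth_eq_iff_index_eq in \<open>auto\<close>)

lemma rep_index_in_reps:
  assumes "t \<in> set e"
  shows "rep_index t < length e" and "e ! rep_index t = t"
  using assms rep_index_nth by (auto simp: in_set_conv_nth)

lemma rep_index_digit_less: "i < s \<Longrightarrow> rep_index (digit \<gamma> s e r i) < length e"
  using rep_index_in_reps digit_in_reps by blast

definition position :: "'a \<Rightarrow> nat" where
  "position r = (\<Sum>i<s. rep_index (digit \<gamma> s e r i) * length e ^ i)"

lemma position_less: "position r < length e ^ s"
  unfolding position_def by (rule sum_digits_less_power) (use rep_index_digit_less in blast)

lemma position_less_if_R_less:
  assumes "R_less \<gamma> s e x y"
  shows "position x < position y"
proof -
  obtain i where i: "i < s"
    and above: "\<forall>j. i < j \<and> j < s \<longrightarrow> digit \<gamma> s e x j = digit \<gamma> s e y j"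
    and "T_less e (digit \<gamma> s e x i) (digit \<gamma> s e y i)"
    using assms unfolding R_less_def by blast
  then obtain a b where "a < b" "b < length e" "e ! a = digit \<gamma> s e x i" "e ! b = digit \<gamma> s e y i"
    unfolding T_less_def by blast
  then have "rep_index (digit \<gamma> s e x i) < rep_index (digit \<gamma> s e y i)"
    using rep_index_nth[of a] rep_index_nth[of b] by auto
  then show ?thesis
    unfolding position_def using i above rep_index_digit_less
    by (intro sum_digits_less_sum_digits[of s _ _ i]) auto
qed

lemma R_less_total:
  assumes "x \<noteq> y"
  shows "R_less \<gamma> s e x y \<or> R_less \<gamma> s e y x"
proof -
  let ?D = "{i. i < s \<and> digit \<gamma> s e x i \<noteq> digit \<gamma> s e y i}"
  define i where "i = Max ?D"
  have "?D \<noteq> {}" using digit_inject assms by blast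
  then have i: "i < s" "digit \<gamma> s e x i \<noteq> digit \<gamma> s e y i" using Max_in[of ?D] i_def by auto
  have above: "\<forall>j. i < j \<and> j < s \<longrightarrow> digit \<gamma> s e x j = digit \<gamma> s e y j"
    using Max_ge[of ?D] i_def by fastforce
  let ?a = "rep_index (digit \<gamma> s e x i)" and ?b = "rep_index (digit \<gamma> s e y i)"
  have a: "?a < length e" "e ! ?a = digit \<gamma> s e x i"
    and b: "?b < length e" "e ! ?b = digit \<gamma> s e y i"
    using rep_index_in_reps digit_in_reps i(1) by blast+
  then have "?a < ?b \<or> ?b < ?a" using i(2) by (metis linorder_neqE_nat)
  then show ?thesis
    using a b i above unfolding R_less_def T_less_def by (metis (no_types, lifting))
qed

lemma R_less_iff_position_less: "R_less \<gamma> s e x y \<longleftrightarrow> position x < position y"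
  using R_less_total position_less_if_R_less by (metis less_asym less_irrefl)

lemma position_inject: "position x = position y \<Longrightarrow> x = y"
  using R_less_total position_less_if_R_less by (metis less_irrefl)

lemma position_surj:
  assumes "m < length e ^ s"
  shows "\<exists>r. position r = m"
proof -
  let ?q = "length e"
  have q: "0 < ?q" by (rule length_reps_pos)
  define d where "d i = (if i < s then e ! (m div ?q ^ i mod ?q) else 0)" for i
  have "is_expansion (\<Sum>i<s. d i * \<gamma> ^ i) d"
    unfolding is_expansion_def d_def using q by simp
  then have "digit \<gamma> s e (\<Sum>i<s. d i * \<gamma> ^ i) = d" by (rule digit_eqI)
  then have "position (\<Sum>i<s. d i * \<gamma> ^ i) = (\<Sum>i<s. m div ?q ^ i mod ?q * ?q ^ i)"
    unfolding position_def d_def using q by (intro sum.cong) (simp_all add: rep_index_nth)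
  also have "\<dots> = m" using assms by (simp add: sum_digits_eq_mod_power)
  finally show ?thesis by blast
qed

lemma card_R_less: "card {x. R_less \<gamma> s e x r} = position r"
proof -
  have "{..<position r} \<subseteq> position ` {x. position x < position r}"
  proof
    fix j assume j: "j \<in> {..<position r}"
    then obtain x where "position x = j" using position_surj position_less[of r] by fastforce
    then show "j \<in> position ` {x. position x < position r}" using j by force
  qed
  then have "position ` {x. position x < position r} = {..<position r}" by auto
  moreover have "inj_on position {x. position x < position r}"
    using position_inject by (auto intro: inj_onI)
  ultimately show ?thesis
    unfolding R_less_iff_position_less by (metis card_image card_lessThan)
qed

lemma rho_position: "rho \<gamma> s e (position r) = r"
  unfolding rho_def card_R_less by (rule the_equality) (simp_all add: position_inject)

lemma rho_eq_0_and_1: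
  "\<exists>z w. z < length e ^ s \<and> w < length e ^ s \<and> rho \<gamma> s e z = 0 \<and> rho \<gamma> s e w = 1"
  using rho_position position_less by blast

lemma position_mod_length: "position r mod length e = rep_index (digit \<gamma> s e r 0)"
proof -
  obtain s' where s: "s = Suc s'" using s_pos by (cases s) auto
  have "position r = rep_index (digit \<gamma> s e r 0)
          + length e * (\<Sum>i<s'. rep_index (digit \<gamma> s e r (Suc i)) * length e ^ i)"
    unfolding position_def unfolding s sum.lessThan_Suc_shift by (simp add: sum_distrib_left ac_simps)
  then show ?thesis using rep_index_digit_less[of 0 r] s by simp
qed

lemma gamma_pow_pred_mult_eq_0_iff: "\<gamma> ^ (s - 1) * r = 0 \<longleftrightarrow> digit \<gamma> s e r 0 = 0"
proof -
  obtain s' where s: "s = Suc s'" using s_pos by (cases s) auto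
  let ?t = "\<Sum>i<s'. digit \<gamma> s e r (Suc i) * \<gamma> ^ i"
  have r: "r = digit \<gamma> s e r 0 + \<gamma> * ?t"
    using sum_digit[of r] unfolding s sum.lessThan_Suc_shift by (simp add: sum_distrib_left ac_simps)
  have "\<gamma> ^ (s - 1) * r = \<gamma> ^ (s - 1) * digit \<gamma> s e r 0 + \<gamma> ^ s * ?t"
    by (subst r) (simp add: s algebra_simps)
  then have "\<gamma> ^ (s - 1) * r = \<gamma> ^ (s - 1) * digit \<gamma> s e r 0"
    by (simp add: gamma_pow_s_eq_0)
  moreover have "digit \<gamma> s e r 0 - 0 \<notin> principal_ideal \<gamma>" if "digit \<gamma> s e r 0 \<noteq> 0"
    using that reps_eqI[OF digit_in_reps zero_in_reps] s by blast
  ultimately show ?thesis using gamma_pow_mult_neq_0[of "s - 1"] s by auto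
qed

lemma gamma_pow_pred_mult_rho_eq_0_iff:
  assumes "j < length e ^ s"
  shows "\<gamma> ^ (s - 1) * rho \<gamma> s e j = 0 \<longleftrightarrow> length e dvd j"
proof -
  obtain r where j: "position r = j" using position_surj assms by blast
  have "digit \<gamma> s e r 0 = 0 \<longleftrightarrow> rep_index (digit \<gamma> s e r 0) = 0"
    using rep_index_in_reps(2)[OF digit_in_reps, of 0 r] rep_index_nth[of 0] reps_0 s_pos length_reps_pos
    by (metis One_nat_def Suc_le_eq)
  then show ?thesis
    using position_mod_length[of r] gamma_pow_pred_mult_eq_0_iff[of r] rho_position[of r] j
    by (simp add: dvd_eq_mod_eq_0)
qed

end

section \<open>The simplex code\<close>

lemma G_alpha_column_exists:
  assumes "\<forall>i<Suc k. f i < length e ^ s"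
  shows "\<exists>c<(length e ^ s) ^ Suc k. \<forall>i<Suc k. G_alpha \<gamma> s e (Suc k) i c = rho \<gamma> s e (f i)"
  using assms
proof (induction k arbitrary: f)
  case 0
  then show ?case by (intro exI[of _ "f 0"]) auto
next
  case (Suc k)
  let ?Q = "length e ^ s"
  obtain c' where c': "c' < ?Q ^ Suc k"
    and col: "\<forall>i<Suc k. G_alpha \<gamma> s e (Suc k) i c' = rho \<gamma> s e (f (Suc i))"
    using Suc.IH[of "\<lambda>i. f (Suc i)"] Suc.prems by auto
  \<comment> \<open>block \<open>f 0\<close> of \<open>G_(k+2)\<close>, column \<open>c'\<close> within the block\<close>
  define N where "N = ?Q ^ Suc k"
  define c where "c = f 0 * N + c'"
  have "0 < N" using c' unfolding N_def by linarith
  then have "c div N = f 0" and "c mod N = c'" using c' unfolding c_def N_def by auto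
  then have "\<forall>i<Suc (Suc k). G_alpha \<gamma> s e (Suc (Suc k)) i c = rho \<gamma> s e (f i)"
    using col unfolding N_def by (auto simp: Let_def less_Suc_eq_0_disj)
  moreover have "c < ?Q ^ Suc (Suc k)"
  proof -
    have "c < (f 0 + 1) * N" using c' unfolding c_def N_def by simp
    also have "\<dots> \<le> ?Q * N" using Suc.prems by (intro mult_le_mono1) (simp add: Suc_le_eq)
    finally show ?thesis unfolding N_def by simp
  qed
  ultimately show ?case by blast
qed

lemma G_alpha_last_row:
  assumes "c < (length e ^ s) ^ Suc k"
  shows "G_alpha \<gamma> s e (Suc k) k c = rho \<gamma> s e (c mod length e ^ s)"
  using assms
proof (induction k arbitrary: c)
  case (Suc k)
  then have "length e ^ s \<noteq> 0" by (cases "length e ^ s = 0") auto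
  then show ?case using Suc.IH[of "c mod (length e ^ s) ^ Suc k"] by (simp add: Let_def mod_mod_cancel)
qed simp

lemma code_rank_le: "free_submodule n C' m \<Longrightarrow> C \<subseteq> C' \<Longrightarrow> code_rank n C \<le> m"
  unfolding code_rank_def by (blast intro: Least_le)

lemma hweight_le: "hweight n v \<le> n"
  unfolding hweight_def using card_mono[of "{..<n}" "{c. c < n \<and> v c \<noteq> 0}"] by auto

lemma min_hdist_le_hweight:
  assumes "v \<in> C" and "v \<noteq> (\<lambda>_. 0)"
  shows "min_hdist n C \<le> hweight n v"
proof -
  have "{hweight n u | u. u \<in> C \<and> u \<noteq> (\<lambda>_. 0)} \<subseteq> {..n}" using hweight_le by auto
  then have "finite {hweight n u | u. u \<in> C \<and> u \<noteq> (\<lambda>_. 0)}" by (rule finite_subset) simp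
  then show ?thesis unfolding min_hdist_def using assms by (blast intro: Min_le)
qed

context chain_ring_digits
begin

lemma free_submodule_simplex_alpha:
  "free_submodule ((length e ^ s) ^ k) (simplex_alpha \<gamma> s e k) k"
proof -
  let ?n = "(length e ^ s) ^ k"
  define b where "b = (\<lambda>j c. if c < ?n then G_alpha \<gamma> s e k j c else 0)"
  have indep: "lin_indep ?n k b"
    unfolding lin_indep_def
  proof (intro allI impI)
    fix a j assume comb: "\<forall>c<?n. (\<Sum>i<k. a i * b i c) = 0" and j: "j < k"
    then obtain k' where k: "k = Suc k'" by (cases k) auto
    obtain z w where zw: "z < length e ^ s" "w < length e ^ s" "rho \<gamma> s e z = 0" "rho \<gamma> s e w = 1"
      using rho_eq_0_and_1 by blast
    have "\<forall>i<Suc k'. (if i = j then w else z) < length e ^ s" using zw by simp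
    from G_alpha_column_exists[OF this, of \<gamma>] obtain c where c: "c < ?n"
      and col: "\<forall>i<k. G_alpha \<gamma> s e k i c = rho \<gamma> s e (if i = j then w else z)"
      unfolding k by blast
    have "(\<Sum>i<k. a i * b i c) = (\<Sum>i<k. if i = j then a i else 0)"
      using c col zw by (intro sum.cong) (auto simp: b_def)
    then show "a j = 0" using comb c j by simp
  qed
  have "(\<lambda>c. if c < ?n then \<Sum>j<k. x j * b j c else 0)
          = (\<lambda>c. if c < ?n then \<Sum>j<k. x j * G_alpha \<gamma> s e k j c else 0)" for x
    by (rule ext) (simp add: b_def)
  then have span: "simplex_alpha \<gamma> s e k = rspan ?n k b" unfolding simplex_alpha_def rspan_def by simp
  have "\<forall>j<k. b j \<in> vecs ?n" by (simp add: b_def vecs_def)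
  with indep span show ?thesis unfolding free_submodule_def by blast
qed

lemma gamma_pow_last_row_in_simplex_alpha:
  assumes "1 \<le> k"
  shows "(\<lambda>c. if c < (length e ^ s) ^ k then \<gamma> ^ (s - 1) * rho \<gamma> s e (c mod length e ^ s) else 0)
           \<in> simplex_alpha \<gamma> s e k"
proof -
  let ?n = "(length e ^ s) ^ k"
  obtain k' where k: "k = Suc k'" using assms by (cases k) auto
  let ?a = "\<lambda>j. if j = k' then \<gamma> ^ (s - 1) else 0"
  have "(\<Sum>j<k. ?a j * G_alpha \<gamma> s e k j c) = \<gamma> ^ (s - 1) * rho \<gamma> s e (c mod length e ^ s)"
    if "c < ?n" for c
    using that G_alpha_last_row[of c e s k' \<gamma>] unfolding k by (simp add: if_distrib)
  then have "(\<lambda>c. if c < ?n then \<gamma> ^ (s - 1) * rho \<gamma> s e (c mod length e ^ s) else 0)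
               = (\<lambda>c. if c < ?n then \<Sum>j<k. ?a j * G_alpha \<gamma> s e k j c else 0)"
    by auto
  then show ?thesis unfolding simplex_alpha_def rspan_def mem_Collect_eq by (rule exI[of _ ?a])
qed

lemma min_hdist_simplex_alpha_le:
  assumes "1 \<le> k"
  shows "min_hdist ((length e ^ s) ^ k) (simplex_alpha \<gamma> s e k)
           \<le> length e ^ (s * k) - length e ^ (s * k - 1)"
proof -
  let ?q = "length e" and ?Q = "length e ^ s"
  let ?n = "?Q ^ k"
  define v where "v = (\<lambda>c. if c < ?n then \<gamma> ^ (s - 1) * rho \<gamma> s e (c mod ?Q) else 0)"
  have v_neq_0_iff: "v c \<noteq> 0 \<longleftrightarrow> \<not> ?q dvd c" if "c < ?n" for c
  proof -
    have "?q dvd c mod ?Q \<longleftrightarrow> ?q dvd c"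
      using s_pos by (intro dvd_mod_iff) (simp add: dvd_power)
    moreover have "c mod ?Q < ?Q" using length_reps_pos by simp
    ultimately show ?thesis using that gamma_pow_pred_mult_rho_eq_0_iff[of "c mod ?Q"] by (simp add: v_def)
  qed
  define M where "M = ?q ^ (s * k - 1)"
  have n: "?n = ?q * M" using s_pos assms unfolding M_def by (simp flip: power_Suc power_mult)
  have "hweight ?n v = card {c. c < ?q * M \<and> \<not> ?q dvd c}"
    unfolding hweight_def n[symmetric]
    by (intro arg_cong[where f = card] Collect_cong) (use v_neq_0_iff in blast)
  also have "\<dots> = ?q * M - M" using length_reps_pos by (rule card_not_dvd_less_mult)
  finally have weight: "hweight ?n v = ?q ^ (s * k) - ?q ^ (s * k - 1)"
    using n unfolding M_def by (simp add: power_mult)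
  have "1 \<le> M" unfolding M_def using length_reps_pos by (intro one_le_power) linarith
  then have "?q \<le> ?q * M" by simp
  then have "1 < ?n" using n length_reps by linarith
  then have "v \<noteq> (\<lambda>_. 0)" using v_neq_0_iff[of 1] length_reps by auto
  then have "min_hdist ?n (simplex_alpha \<gamma> s e k) \<le> hweight ?n v"
    using gamma_pow_last_row_in_simplex_alpha[OF assms] unfolding v_def by (intro min_hdist_le_hweight)
  with weight show ?thesis by simp
qed

end

theorem proposition3p28:
  fixes \<gamma> :: "'a::{comm_ring_1, finite}" and s k :: nat and e :: "'a list"
  assumes "chain_ring TYPE('a)"
    and "chain_ring_data \<gamma> s e"
    and "k \<ge> 1"
  defines "q \<equiv> length e"
  defines "n \<equiv> (q ^ s) ^ k"
  shows "real n > (\<Sum>i<code_rank n (simplex_alpha \<gamma> s e k).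
            real_of_int \<lceil>real (min_hdist n (simplex_alpha \<gamma> s e k)) / real q ^ i\<rceil>)"
proof -
  interpret chain_ring_digits \<gamma> s e by unfold_locales (rule assms(2))
  have "code_rank n (simplex_alpha \<gamma> s e k) \<le> k"
    unfolding n_def q_def by (rule code_rank_le[OF free_submodule_simplex_alpha order_refl])
  also have "k \<le> s * k" using s_pos by simp
  finally have rank: "code_rank n (simplex_alpha \<gamma> s e k) \<le> s * k" .
  have dist: "min_hdist n (simplex_alpha \<gamma> s e k) \<le> q ^ (s * k) - q ^ (s * k - 1)"
    unfolding n_def q_def using assms(3) by (rule min_hdist_simplex_alpha_le)
  have "n = q ^ (s * k)" unfolding n_def by (simp add: power_mult)
  with griesmer_sum_less_power[OF _ rank dist] show ?thesis
    using length_reps_pos unfolding q_def by simp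
qed

end
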